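(* In the setting below, if $N\ge4$ then the $H$-skeleton $B=X^H$ is a $p$-robust random 0–1 matrix with $p=2/N$. Setting: $G$ is a graph on $N$ vertices with edges $e_1,\dots,e_m$; $G_k$ has the same vertices and edge set $\{e_1,\dots,e_k\}$; fix $0\le k\le m-1$, $S=\mathcal I(G_k)$, $H=\mathcal I(G_{k+1})$, and $n\ge1$. Initial states $A_1,\dots,A_n\in S$ have arbitrary joint distribution; for each $i\in[n]$ the BIDC chain on $G_k$ is run from $A_i$ for $n$ steps with fresh randomness independent across steps, chains and initial states, giving $X_{i0}=A_i,X_{i1},\dots,X_{in}$; $X$ is the $n\times n$ matrix with $i$-th row $(X_{i1},\dots,X_{in})$.
   Context: $\mathcal I(F)$ is the family of independent sets (including $\emptyset$) of a graph $F$. BIDC on $F=(V,E)$: from $X_t$ draw $u\in V$ uniformly; $X_{t+1}=X_t\setminus\{u\}$ if $u\in X_t$; $X_{t+1}=X_t\cup\{u\}$ if $u\notin X_t$ and $X_t\cup\{u\}\in\mathcal I(F)$; else $X_{t+1}=X_t$. The $H$-skeleton $X^H$ is the 0–1 matrix with entry $1$ iff $X_{ij}\in H$. In an $n\times n$ matrix, entry $(i,j)$ precedes $(k,\ell)$, written $(i,j)\prec(k,\ell)$, if $i<k$, or $i=k$ and $j<\ell$. A random 0–1 matrix $Y=[\xi_{ij}]$ is $p$-robust ($p\in(0,1)$) if for every $(i,j)$, every set of preceding positions $(i_1,j_1),\dots,(i_r,j_r)\prec(i,j)$ and every $a_1,\dots,a_r\in\{0,1\}$ with $\Pr(\xi_{i_1j_1}=a_1,\dots,\xi_{i_rj_r}=a_r)>0$,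 we have $\Pr(\xi_{ij}=1\mid \xi_{i_1j_1}=a_1,\dots,\xi_{i_rj_r}=a_r)\ge p$ (and $\Pr(\xi_{ij}=1)\ge p$ unconditionally). *)

theory Defs
  imports "HOL-Probability.Probability"
begin

text \<open>A simple graph is given by a finite vertex set V and a set E of edges,
each edge being a 2-element subset of V.  Independent sets (including the empty set):\<close>
definition indep_sets :: "'a set \<Rightarrow> 'a set set \<Rightarrow> 'a set set" where
  "indep_sets V E = {I. I \<subseteq> V \<and> (\<forall>e\<in>E. \<not> e \<subseteq> I)}"

definition bidc_move :: "'a set \<Rightarrow> 'a set set \<Rightarrow> 'a set \<Rightarrow> 'a \<Rightarrow> 'a set" where
  "bidc_move V E X u =
     (if u \<in> X then X - {u}
      else if insert u X \<in> indep_sets V E then insert u X else X)"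

fun bidc_run :: "'a set \<Rightarrow> 'a set set \<Rightarrow> 'a set \<Rightarrow> (nat \<Rightarrow> 'a) \<Rightarrow> nat \<Rightarrow> 'a set" where
  "bidc_run V E A us 0 = A"
| "bidc_run V E A us (Suc j) = bidc_move V E (bidc_run V E A us j) (us (Suc j))"

definition positions :: "nat \<Rightarrow> (nat \<times> nat) set" where
  "positions n = {1..n} \<times> {1..n}"

definition prec :: "nat \<times> nat \<Rightarrow> nat \<times> nat \<Rightarrow> bool" where
  "prec q q' \<longleftrightarrow> fst q < fst q' \<or> (fst q = fst q' \<and> snd q < snd q')"

text \<open>Entries outside [n]x[n] are set to {} (irrelevant).\<close>
definition bidc_matrix ::
  "'a set \<Rightarrow> 'a set set \<Rightarrow> nat \<Rightarrow> (nat \<Rightarrow> 'a set) pmf \<Rightarrow> (nat \<times> nat \<Rightarrow> 'a set) pmf" where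
  "bidc_matrix V E n mu =
     do { A \<leftarrow> mu;
          U \<leftarrow> Pi_pmf (positions n) undefined (\<lambda>_. pmf_of_set V);
          return_pmf (\<lambda>(i, j). if (i, j) \<in> positions n
                                then bidc_run V E (A i) (\<lambda>t. U (i, t)) j else {}) }"

definition skeleton :: "nat \<Rightarrow> 'a set set \<Rightarrow> (nat \<times> nat \<Rightarrow> 'a set) pmf \<Rightarrow> (nat \<times> nat \<Rightarrow> bool) pmf" where
  "skeleton n H Xd = map_pmf (\<lambda>X q. q \<in> positions n \<and> X q \<in> H) Xd"

text \<open>p-robustness of a random n x n 0-1 matrix Y (True = 1).  P ranges over sets of
  positions preceding (i,j) (P = {} gives the unconditional requirement).\<close>
definition p_robust :: "nat \<Rightarrow> real \<Rightarrow> (nat \<times> nat \<Rightarrow> bool) pmf \<Rightarrow> bool" where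
  "p_robust n p Y \<longleftrightarrow>
     (\<forall>q \<in> positions n. \<forall>P a.
        P \<subseteq> {q' \<in> positions n. prec q' q} \<longrightarrow>
        measure_pmf.prob Y {y. \<forall>r\<in>P. y r = a r} > 0 \<longrightarrow>
        measure_pmf.prob Y {y. y q \<and> (\<forall>r\<in>P. y r = a r)}
          / measure_pmf.prob Y {y. \<forall>r\<in>P. y r = a r} \<ge> p)"

end

theory Submission
  imports Defs
begin

text \<open>Entry (i,j) of the matrix arises from X(i,j-1) by one BIDC move with the fresh uniform
vertex U(i,j), whereas the initial states and the remaining choices already determine all
entries preceding (i,j).  Conditionally on all of these, the entry lies in the independent sets
of G(k+1) = G(k) + xy as soon as the move does not leave both x and y in the state.  As X(i,j-1)
is independent in G(k), at least two vertices achieve this: removing x or y when both are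
present, and otherwise any vertex other than an absent endpoint.  Hence the conditional
probability is at least 2/N.\<close>

lemma bidc_move_in_indep_sets:
  "Z \<in> indep_sets V E \<Longrightarrow> bidc_move V E Z u \<in> indep_sets V E"
  unfolding bidc_move_def indep_sets_def by auto

lemma bidc_run_in_indep_sets:
  "A \<in> indep_sets V E \<Longrightarrow> bidc_run V E A us j \<in> indep_sets V E"
  by (induction j) (auto intro: bidc_move_in_indep_sets)

lemma bidc_run_cong:
  assumes "\<And>t. 1 \<le> t \<Longrightarrow> t \<le> j \<Longrightarrow> us t = us' t"
  shows "bidc_run V E A us j = bidc_run V E A us' j"
  using assms by (induction j) auto

lemma bidc_move_removes: "u \<in> Z \<Longrightarrow> u \<notin> bidc_move V E Z u"
  unfolding bidc_move_def by auto

lemma bidc_move_keeps_out: "w \<notin> Z \<Longrightarrow> u \<noteq> w \<Longrightarrow> w \<notin> bidc_move V E Z u"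
  unfolding bidc_move_def by auto

lemma indep_sets_insert_edge:
  "indep_sets V (insert {x, y} E) = {I \<in> indep_sets V E. \<not> {x, y} \<subseteq> I}"
  unfolding indep_sets_def by auto

lemma card_moves_into_indep_sets_insert_edge:
  assumes "finite V" "card V \<ge> 3" "x \<in> V" "y \<in> V" "x \<noteq> y" "Z \<in> indep_sets V E"
  shows "2 \<le> card {u \<in> V. bidc_move V E Z u \<in> indep_sets V (insert {x, y} E)}"
    (is "_ \<le> card ?good")
proof -
  have good: "u \<in> ?good" if "u \<in> V" "x \<notin> bidc_move V E Z u \<or> y \<notin> bidc_move V E Z u" for u
    using that bidc_move_in_indep_sets[OF assms(6)] by (auto simp: indep_sets_insert_edge)
  have "finite ?good" using assms(1) by simp
  consider "x \<notin> Z" | "y \<notin> Z" | "x \<in> Z" "y \<in> Z" by blast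
  then show ?thesis
  proof cases
    case out: 1
    have "V - {x} \<subseteq> ?good" using good bidc_move_keeps_out[OF out] by blast
    then have "card (V - {x}) \<le> card ?good" using \<open>finite ?good\<close> by (rule card_mono[rotated])
    then show ?thesis using assms(1-3) by simp
  next
    case out: 2
    have "V - {y} \<subseteq> ?good" using good bidc_move_keeps_out[OF out] by blast
    then have "card (V - {y}) \<le> card ?good" using \<open>finite ?good\<close> by (rule card_mono[rotated])
    then show ?thesis using assms(1,2,4) by simp
  next
    case 3
    have "x \<in> ?good" using good[OF assms(3)] bidc_move_removes[OF 3(1)] by blast
    moreover have "y \<in> ?good" using good[OF assms(4)] bidc_move_removes[OF 3(2)] by blast
    ultimately have "{x, y} \<subseteq> ?good" by blast
    then have "card {x, y} \<le> card ?good" using \<open>finite ?good\<close> by (rule card_mono[rotated])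
    then show ?thesis using assms(5) by simp
  qed
qed

lemma prob_move_into_indep_sets_insert_edge:
  assumes "finite V" "card V \<ge> 3" "x \<in> V" "y \<in> V" "x \<noteq> y" "Z \<in> indep_sets V E"
  shows "2 / card V \<le> measure_pmf.prob (pmf_of_set V)
                          {u. bidc_move V E Z u \<in> indep_sets V (insert {x, y} E)}"
proof -
  have "V \<noteq> {}" using assms(3) by blast
  moreover have "V \<inter> {u. bidc_move V E Z u \<in> indep_sets V (insert {x, y} E)}
               = {u \<in> V. bidc_move V E Z u \<in> indep_sets V (insert {x, y} E)}" by blast
  ultimately show ?thesis
    using card_moves_into_indep_sets_insert_edge[OF assms] assms(1,2)
    by (simp add: measure_pmf_of_set divide_right_mono)
qed

definition bidc_realisation ::
  "'a set \<Rightarrow> 'a set set \<Rightarrow> nat \<Rightarrow> (nat \<Rightarrow> 'a set) \<Rightarrow> (nat \<times> nat \<Rightarrow> 'a) \<Rightarrow> nat \<times> nat \<Rightarrow> 'a set"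
  where "bidc_realisation V E n A U = (\<lambda>(i, j).
           if (i, j) \<in> positions n then bidc_run V E (A i) (\<lambda>t. U (i, t)) j else {})"

lemma bidc_matrix_eq_bind_realisation:
  "bidc_matrix V E n mu =
     bind_pmf mu (\<lambda>A. map_pmf (bidc_realisation V E n A)
                         (Pi_pmf (positions n) undefined (\<lambda>_. pmf_of_set V)))"
  unfolding bidc_matrix_def bidc_realisation_def map_pmf_def ..

lemma bidc_realisation_upd_preceding:
  "prec r q \<Longrightarrow> bidc_realisation V E n A (U(q := u)) r = bidc_realisation V E n A U r"
  unfolding bidc_realisation_def prec_def
  by (cases r, cases q) (auto intro!: bidc_run_cong)

lemma bidc_realisation_upd_self:
  assumes "(i, Suc j) \<in> positions n"
  shows "bidc_realisation V E n A (U((i, Suc j) := u)) (i, Suc j)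
           = bidc_move V E (bidc_run V E (A i) (\<lambda>t. U (i, t)) j) u"
proof -
  have "bidc_run V E (A i) (\<lambda>t. (U((i, Suc j) := u)) (i, t)) j = bidc_run V E (A i) (\<lambda>t. U (i, t)) j"
    by (rule bidc_run_cong) simp
  then show ?thesis using assms unfolding bidc_realisation_def by simp
qed

lemma Pi_pmf_split_coordinate:
  assumes "finite I" "q \<in> I"
  shows "Pi_pmf I d p = bind_pmf (Pi_pmf (I - {q}) d p) (\<lambda>f. map_pmf (\<lambda>u. f(q := u)) (p q))"
proof -
  have "Pi_pmf I d p = Pi_pmf (insert q (I - {q})) d p" using assms(2) by (simp add: insert_absorb)
  also have "\<dots> = bind_pmf (p q) (\<lambda>u. bind_pmf (Pi_pmf (I - {q}) d p) (\<lambda>f. return_pmf (f(q := u))))"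
    using assms(1) by (subst Pi_pmf_insert') auto
  also have "\<dots> = bind_pmf (Pi_pmf (I - {q}) d p) (\<lambda>f. map_pmf (\<lambda>u. f(q := u)) (p q))"
    by (subst bind_commute_pmf) (simp add: map_pmf_def)
  finally show ?thesis .
qed

lemma prob_bind_pmf_scaled_mono:
  fixes c :: real
  assumes "\<And>x. x \<in> set_pmf p \<Longrightarrow> c * measure_pmf.prob (f x) B \<le> measure_pmf.prob (f x) A"
  shows "c * measure_pmf.prob (bind_pmf p f) B \<le> measure_pmf.prob (bind_pmf p f) A"
proof (cases "c \<ge> 0")
  case True
  have "ennreal (c * measure_pmf.prob (bind_pmf p f) B) = (\<integral>\<^sup>+x. ennreal c * emeasure (f x) B \<partial>p)"
    using True by (simp add: ennreal_mult measure_pmf.emeasure_eq_measure[symmetric] nn_integral_cmult)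
  also have "\<dots> \<le> (\<integral>\<^sup>+x. emeasure (f x) A \<partial>p)"
    using True assms by (intro nn_integral_mono_AE)
       (simp add: AE_measure_pmf_iff measure_pmf.emeasure_eq_measure ennreal_mult[symmetric])
  also have "\<dots> = ennreal (measure_pmf.prob (bind_pmf p f) A)"
    by (simp add: measure_pmf.emeasure_eq_measure[symmetric])
  finally show ?thesis by simp
next
  case False
  then have "c * measure_pmf.prob (bind_pmf p f) B \<le> 0" by (simp add: mult_nonpos_nonneg)
  then show ?thesis by (meson measure_nonneg order_trans)
qed

lemma prob_map_pmf_conj_ge_if_const:
  fixes c :: real
  assumes "\<And>u. Q (g u) = b" "b \<Longrightarrow> c \<le> measure_pmf.prob p {u. R (g u)}"
  shows "c * measure_pmf.prob (map_pmf g p) {y. Q y} \<le> measure_pmf.prob (map_pmf g p) {y. R y \<and> Q y}"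
proof (cases b)
  case True
  then have "g -` {y. Q y} = UNIV" "g -` {y. R y \<and> Q y} = {u. R (g u)}" using assms(1) by auto
  then show ?thesis using True assms(2) by simp
next
  case False
  then have "g -` {y. Q y} = {}" using assms(1) by auto
  then show ?thesis by simp
qed

lemma p_robustI:
  assumes "\<And>q P a. q \<in> positions n \<Longrightarrow> P \<subseteq> {q' \<in> positions n. prec q' q} \<Longrightarrow>
             p * measure_pmf.prob Y {y. \<forall>r\<in>P. y r = a r}
               \<le> measure_pmf.prob Y {y. y q \<and> (\<forall>r\<in>P. y r = a r)}"
  shows "p_robust n p Y"
  using assms unfolding p_robust_def by (auto simp: pos_le_divide_eq)

lemma p_robust_skeleton_bidc_matrix_insert_edge:
  assumes "finite V" "card V \<ge> 3" "x \<in> V" "y \<in> V" "x \<noteq> y"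
    and initial: "\<forall>A \<in> set_pmf mu. \<forall>i \<in> {1..n}. A i \<in> indep_sets V E"
  shows "p_robust n (2 / card V) (skeleton n (indep_sets V (insert {x, y} E)) (bidc_matrix V E n mu))"
proof (rule p_robustI)
  fix q P and a :: "nat \<times> nat \<Rightarrow> bool"
  assume q: "q \<in> positions n" and P: "P \<subseteq> {q' \<in> positions n. prec q' q}"
  define H where "H = indep_sets V (insert {x, y} E)"
  define PV where "PV = pmf_of_set V"
  define entries
    where "entries A f u = (\<lambda>r. r \<in> positions n \<and> bidc_realisation V E n A (f(q := u)) r \<in> H)"
    for A f u
  obtain i j' where "q = (i, j')" "i \<in> {1..n}" "j' \<in> {1..n}" using q unfolding positions_def by auto
  then obtain j where q_eq: "q = (i, Suc j)" and i: "i \<in> {1..n}" by (cases j') auto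
  have "finite (positions n)" unfolding positions_def by simp
  have Y_eq: "skeleton n H (bidc_matrix V E n mu) =
      bind_pmf mu (\<lambda>A. bind_pmf (Pi_pmf (positions n - {q}) undefined (\<lambda>_. PV))
                                  (\<lambda>f. map_pmf (entries A f) PV))"
    unfolding skeleton_def bidc_matrix_eq_bind_realisation
      Pi_pmf_split_coordinate[OF \<open>finite (positions n)\<close> q] PV_def entries_def
    by (simp add: map_bind_pmf map_pmf_comp)
  show "2 / card V * measure_pmf.prob (skeleton n H (bidc_matrix V E n mu)) {y. \<forall>r\<in>P. y r = a r}
      \<le> measure_pmf.prob (skeleton n H (bidc_matrix V E n mu)) {y. y q \<and> (\<forall>r\<in>P. y r = a r)}"
    unfolding Y_eq
  proof (intro prob_bind_pmf_scaled_mono)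
    fix A f assume A: "A \<in> set_pmf mu"
    define Z where "Z = bidc_run V E (A i) (\<lambda>t. f (i, t)) j"
    have Z: "Z \<in> indep_sets V E" unfolding Z_def using initial A i by (auto intro: bidc_run_in_indep_sets)
    have entry_q: "entries A f u q \<longleftrightarrow> bidc_move V E Z u \<in> H" for u
      using q unfolding entries_def Z_def q_eq by (simp add: bidc_realisation_upd_self)
    have entries_preceding: "entries A f u r = entries A f undefined r" if "r \<in> P" for u r
    proof -
      have "prec r q" using that P by auto
      then show ?thesis unfolding entries_def by (simp add: bidc_realisation_upd_preceding)
    qed
    show "2 / card V * measure_pmf.prob (map_pmf (entries A f) PV) {y. \<forall>r\<in>P. y r = a r}
        \<le> measure_pmf.prob (map_pmf (entries A f) PV) {y. y q \<and> (\<forall>r\<in>P. y r = a r)}"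
    proof (rule prob_map_pmf_conj_ge_if_const[where b = "\<forall>r\<in>P. entries A f undefined r = a r"])
      show "(\<forall>r\<in>P. entries A f u r = a r) \<longleftrightarrow> (\<forall>r\<in>P. entries A f undefined r = a r)" for u
        using entries_preceding by blast
      show "2 / card V \<le> measure_pmf.prob PV {u. entries A f u q}"
        unfolding entry_q PV_def H_def by (rule prob_move_into_indep_sets_insert_edge[OF assms(1-5) Z])
    qed
  qed
qed

theorem lemma4:
  fixes V :: "'a set" and es :: "'a set list" and N k n :: nat
    and mu :: "(nat \<Rightarrow> 'a set) pmf"
  assumes "finite V" and "card V = N" and "N \<ge> 4"
    and "distinct es" and "\<forall>e \<in> set es. e \<subseteq> V \<and> card e = 2"
    and "k < length es"
    and "n \<ge> 1"
    and "\<forall>A \<in> set_pmf mu. \<forall>i \<in> {1..n}. A i \<in> indep_sets V (set (take k es))"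
  shows "p_robust n (2 / real N)
           (skeleton n (indep_sets V (set (take (Suc k) es)))
              (bidc_matrix V (set (take k es)) n mu))"
proof -
  have "es ! k \<in> set es" using assms(6) by simp
  then have "es ! k \<subseteq> V" "card (es ! k) = 2" using assms(5) by auto
  then obtain x y where edge: "es ! k = {x, y}" "x \<noteq> y" "x \<in> V" "y \<in> V"
    by (auto simp: card_2_iff)
  have "set (take (Suc k) es) = insert {x, y} (set (take k es))"
    using assms(6) edge(1) by (simp add: take_Suc_conv_app_nth)
  then show ?thesis
    using p_robust_skeleton_bidc_matrix_insert_edge[OF assms(1) _ edge(3,4,2) assms(8)] assms(2,3)
    by simp
qed

end
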